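(* Let $0<b<1$, $K_3>0$, and let $\Omega=\{(r,\phi): b\le r\le 1,\ 0\le \phi<2\pi\}$ be the annulus in planar polar coordinates. For $\delta\le 1$ and a radial perturbation $\eta=\eta(r)\in C^1([b,1])$, define the second variation of the Oseen–Frank energy about the defect-free state by $$\delta^2E(\eta,\delta)=K_3\iint_\Omega \Big(|\nabla\eta|^2-\delta\Big(\frac{\eta}{r}+\eta_r\Big)^2\Big)\,d\Omega = 2\pi K_3\int_b^1\Big(\eta_r^2-\delta\Big(\frac{\eta}{r}+\eta_r\Big)^2\Big)\,r\,dr.$$ Then for every admissible $\eta$, i.e. every $\eta\in C^1([b,1])$ with $\eta(b)=\eta(1)=0$ and $\eta\not\equiv 0$, there exists $\delta_\eta<1$ such that $\delta^2E(\eta,\delta)<0$ for all $\delta$ with $\delta_\eta<\delta\le 1$.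
   Context: This is the second variation of the two-dimensional Oseen–Frank energy $E[\theta]=\iint_\Omega \frac{K_1}{2}(\nabla\cdot\mathbf n)^2+\frac{K_3}{2}(\mathbf n\times(\nabla\times\mathbf n))^2\,d\Omega$, $\mathbf n=(\cos\theta,\sin\theta,0)$, about the defect-free state $\theta^*=\phi+\pi/2$, with Dirichlet (strong tangent) boundary conditions on $r=b$ and $r=1$ (so perturbations vanish there). The elastic anisotropy is $\delta=1-K_1/K_3$ with $K_1\ge 0$, $K_3>0$. *)

theory Defs
  imports "HOL-Analysis.Analysis"
begin

definition C1_on :: "real \<Rightarrow> real \<Rightarrow> (real \<Rightarrow> real) \<Rightarrow> (real \<Rightarrow> real) \<Rightarrow> bool" where
  "C1_on a c eta eta' \<longleftrightarrow>
     (\<forall>x\<in>{a..c}. (eta has_real_derivative eta' x) (at x within {a..c}))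
     \<and> continuous_on {a..c} eta'"

definition second_variation ::
  "real \<Rightarrow> real \<Rightarrow> (real \<Rightarrow> real) \<Rightarrow> (real \<Rightarrow> real) \<Rightarrow> real \<Rightarrow> real" where
  "second_variation K3 b eta eta' \<delta> =
     2 * pi * K3 * integral {b..1}
       (\<lambda>r. ((eta' r)\<^sup>2 - \<delta> * (eta r / r + eta' r)\<^sup>2) * r)"

end

theory Submission
  imports Defs
begin

text \<open>The second variation is affine in \<open>\<delta>\<close>, namely \<open>2\<pi>K\<^sub>3 (A - \<delta> B)\<close> with
  \<open>A = \<integral> \<eta>\<^sub>r\<^sup>2 r dr \<ge> 0\<close> and \<open>B = \<integral> (\<eta>/r + \<eta>\<^sub>r)\<^sup>2 r dr\<close>. Expanding the square,
  \<open>A - B = - \<integral> \<eta>\<^sup>2/r dr - \<integral> (\<eta>\<^sup>2)' dr\<close>, and the last integral vanishes by the boundary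
  conditions, so \<open>A < B\<close>. Hence \<open>\<delta>\<^sub>\<eta> = A / B < 1\<close> works.\<close>

lemma C1_on_continuous_on:
  assumes "C1_on a c eta eta'"
  shows "continuous_on {a..c} eta"
  using assms DERIV_continuous unfolding C1_on_def continuous_on_eq_continuous_within by blast

lemma C1_on_has_integral_derivative_square:
  assumes "C1_on a c eta eta'" "a \<le> c"
  shows "((\<lambda>r. 2 * eta r * eta' r) has_integral (eta c)\<^sup>2 - (eta a)\<^sup>2) {a..c}"
proof (rule fundamental_theorem_of_calculus)
  fix x assume "x \<in> {a..c}"
  then have "((\<lambda>r. (eta r)\<^sup>2) has_real_derivative 2 * eta x * eta' x) (at x within {a..c})"
    using assms(1) unfolding C1_on_def by (auto intro!: derivative_eq_intros)
  then show "((\<lambda>r. (eta r)\<^sup>2) has_vector_derivative 2 * eta x * eta' x) (at x within {a..c})"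
    by (simp add: has_real_derivative_iff_has_vector_derivative)
qed (use assms in simp)

lemma integral_pos_if_continuous_nonneg_nonzero:
  fixes h :: "real \<Rightarrow> real"
  assumes "continuous_on {a..c} h" "a < c" "\<And>x. x \<in> {a..c} \<Longrightarrow> 0 \<le> h x"
    and "x0 \<in> {a..c}" "h x0 \<noteq> 0"
  shows "0 < integral {a..c} h"
proof -
  have "integral {a..c} h \<noteq> 0"
    using integral_eq_0_iff[OF assms(1-3)] assms(4,5) by blast
  moreover have "0 \<le> integral {a..c} h"
    using assms(1,3) integrable_continuous_interval by (intro integral_nonneg) auto
  ultimately show ?thesis by simp
qed

lemma integral_radial_derivative_lt:
  assumes "C1_on a c eta eta'" "0 < a" "a < c"
    and "eta a = 0" "eta c = 0" "x0 \<in> {a..c}" "eta x0 \<noteq> 0"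
  shows "integral {a..c} (\<lambda>r. (eta' r)\<^sup>2 * r)
       < integral {a..c} (\<lambda>r. (eta r / r + eta' r)\<^sup>2 * r)"
proof -
  have cont_eta: "continuous_on {a..c} eta" and cont_eta': "continuous_on {a..c} eta'"
    using assms(1) C1_on_continuous_on unfolding C1_on_def by auto
  have nonzero: "r \<noteq> 0" if "r \<in> {a..c}" for r
    using that assms(2) by auto
  define h where "h r = (eta r)\<^sup>2 / r" for r
  have cont_h: "continuous_on {a..c} h"
    unfolding h_def using cont_eta nonzero by (intro continuous_intros) auto
  have "0 < integral {a..c} h"
    using assms(2,3,6,7) cont_h unfolding h_def
    by (intro integral_pos_if_continuous_nonneg_nonzero) auto
  have boundary: "((\<lambda>r. 2 * eta r * eta' r) has_integral 0) {a..c}"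
    using C1_on_has_integral_derivative_square[OF assms(1)] assms(3-5) by simp
  have expand: "(eta r / r + eta' r)\<^sup>2 * r - (eta' r)\<^sup>2 * r = h r + 2 * eta r * eta' r"
    if "r \<in> {a..c}" for r
    using nonzero[OF that] by (simp add: h_def power2_eq_square field_simps)
  have expanded: "((\<lambda>r. h r + 2 * eta r * eta' r) has_integral integral {a..c} h) {a..c}"
    using has_integral_add[OF integrable_integral[OF integrable_continuous_interval[OF cont_h]] boundary]
    by simp
  have "((\<lambda>r. (eta r / r + eta' r)\<^sup>2 * r - (eta' r)\<^sup>2 * r)
      has_integral integral {a..c} h) {a..c}"
    by (rule has_integral_eq[OF _ expanded]) (simp add: expand)
  then have "integral {a..c} (\<lambda>r. (eta r / r + eta' r)\<^sup>2 * r - (eta' r)\<^sup>2 * r)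
      = integral {a..c} h"
    by (simp add: integral_unique)
  moreover have "(\<lambda>r. (eta r / r + eta' r)\<^sup>2 * r) integrable_on {a..c}"
    "(\<lambda>r. (eta' r)\<^sup>2 * r) integrable_on {a..c}"
    using cont_eta cont_eta' assms(2)
    by (auto intro!: integrable_continuous_interval continuous_intros)
  ultimately show ?thesis
    using \<open>0 < integral {a..c} h\<close> by (simp add: integral_diff)
qed

lemma second_variation_affine:
  assumes "C1_on b 1 eta eta'" "0 < b"
  shows "second_variation K3 b eta eta' \<delta> = 2 * pi * K3 *
    (integral {b..1} (\<lambda>r. (eta' r)\<^sup>2 * r) - \<delta> * integral {b..1} (\<lambda>r. (eta r / r + eta' r)\<^sup>2 * r))"
proof -
  have integrable: "(\<lambda>r. (eta r / r + eta' r)\<^sup>2 * r) integrable_on {b..1}"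
    "(\<lambda>r. (eta' r)\<^sup>2 * r) integrable_on {b..1}"
    using assms C1_on_continuous_on unfolding C1_on_def
    by (auto intro!: integrable_continuous_interval continuous_intros)
  then have "integral {b..1} (\<lambda>r. ((eta' r)\<^sup>2 - \<delta> * (eta r / r + eta' r)\<^sup>2) * r)
      = integral {b..1} (\<lambda>r. (eta' r)\<^sup>2 * r - \<delta> * ((eta r / r + eta' r)\<^sup>2 * r))"
    by (simp add: algebra_simps)
  also have "\<dots> = integral {b..1} (\<lambda>r. (eta' r)\<^sup>2 * r)
      - \<delta> * integral {b..1} (\<lambda>r. (eta r / r + eta' r)\<^sup>2 * r)"
    using integral_diff[OF integrable(2) integrable_on_cmult_left[OF integrable(1), of \<delta>]] by simp
  finally show ?thesis
    unfolding second_variation_def by simp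
qed

lemma affine_negative_near_one:
  fixes A B :: real
  assumes "0 \<le> A" "A < B"
  shows "\<exists>\<delta>0 < 1. \<forall>\<delta>. \<delta>0 < \<delta> \<and> \<delta> \<le> 1 \<longrightarrow> A - \<delta> * B < 0"
proof (intro exI conjI allI impI)
  show "A / B < 1" using assms by simp
  fix \<delta> assume "A / B < \<delta> \<and> \<delta> \<le> 1"
  then show "A - \<delta> * B < 0" using assms by (simp add: divide_less_eq mult.commute)
qed

theorem proposition1:
  fixes b K3 :: real and eta eta' :: "real \<Rightarrow> real"
  assumes "0 < b" "b < 1" "0 < K3"
    and "C1_on b 1 eta eta'"
    and "eta b = 0" "eta 1 = 0"
    and "\<exists>r\<in>{b..1}. eta r \<noteq> 0"
  shows "\<exists>\<delta>\<eta> < 1. \<forall>\<delta>. \<delta>\<eta> < \<delta> \<and> \<delta> \<le> 1 \<longrightarrow> second_variation K3 b eta eta' \<delta> < 0"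
proof -
  define A where "A = integral {b..1} (\<lambda>r. (eta' r)\<^sup>2 * r)"
  define B where "B = integral {b..1} (\<lambda>r. (eta r / r + eta' r)\<^sup>2 * r)"
  have "0 \<le> A"
    unfolding A_def using assms(1,4) unfolding C1_on_def
    by (intro integral_nonneg integrable_continuous_interval continuous_intros) auto
  moreover obtain r0 where "r0 \<in> {b..1}" "eta r0 \<noteq> 0"
    using assms(7) by blast
  then have "A < B"
    unfolding A_def B_def by (rule integral_radial_derivative_lt[OF assms(4,1,2,5,6)])
  ultimately obtain \<delta>0 where "\<delta>0 < 1" and neg: "\<forall>\<delta>. \<delta>0 < \<delta> \<and> \<delta> \<le> 1 \<longrightarrow> A - \<delta> * B < 0"
    using affine_negative_near_one by blast
  have "second_variation K3 b eta eta' \<delta> = 2 * pi * K3 * (A - \<delta> * B)" for \<delta>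
    unfolding A_def B_def using assms(4,1) by (rule second_variation_affine)
  then show ?thesis
    using \<open>\<delta>0 < 1\<close> neg assms(3) by (auto intro!: exI[of _ \<delta>0] mult_pos_neg)
qed

end
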